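(* Let $(g,f)=(d_{n,k})_{n,k\ge 0}$ be a Riordan matrix possessing a type-I $B$-sequence $(b_j)_{j\ge 0}$, and let $A(t)$ and $B(t)=\sum_{j\ge0}b_jt^j$ be the generating functions of its $A$-sequence and of this $B$-sequence. Then $$f=t+tf\,B(tf),\qquad t=\bar f+t\bar f\,B(t\bar f),\qquad A(t)=1+t\,B\!\left(\frac{t^2}{A(t)}\right),$$ and these three formulas are equivalent to one another.
   Context: Let $K$ be $\mathbb{R}$ or $\mathbb{C}$. A (proper) Riordan matrix is a pair $(g,f)$ of formal power series in $K[[t]]$ with $g(0)=1$, $f(0)=0$, $f'(0)\neq 0$, identified with the infinite lower triangular matrix $(d_{n,k})_{n,k\ge0}$, $d_{n,k}=[t^n]g(t)f(t)^k$; we set $d_{n,k}=0$ if $n<0$, $k<0$ or $k>n$. $\bar f$ denotes the compositional inverse of $f$. The $A$-sequence $(a_j)_{j\ge0}$ of $(g,f)$ is the unique sequence whose generating function $A(t)=\sum_j a_jt^j$ satisfies $f(t)=tA(f(t))$ (equivalently $\bar f(t)=t/A(t)$). A type-I $B$-sequence of $(g,f)$ is a sequence $(b_j)_{j\ge0}$ such that $d_{n+1,k}=d_{n,k-1}+\sum_{j\ge0}b_j d_{n-j,k+j}$ for all $n\ge0$ and $k\ge1$. *)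

theory Defs
  imports "HOL-Computational_Algebra.Formal_Power_Series"
begin

definition riordan :: "'a::field fps \<Rightarrow> 'a fps \<Rightarrow> bool" where
  "riordan g f \<longleftrightarrow> fps_nth g 0 = 1 \<and> fps_nth f 0 = 0 \<and> fps_nth (fps_deriv f) 0 \<noteq> 0"

definition rentry :: "'a::field fps \<Rightarrow> 'a fps \<Rightarrow> int \<Rightarrow> int \<Rightarrow> 'a" where
  "rentry g f n k = (if n < 0 \<or> k < 0 \<or> k > n then 0
                      else fps_nth (g * f ^ nat k) (nat n))"

definition is_A_series :: "'a::field fps \<Rightarrow> 'a fps \<Rightarrow> bool" where
  "is_A_series f A \<longleftrightarrow> f = fps_X * fps_compose A f"

text \<open>Type-I B-sequence. The sum over j \<ge> 0 is finite: all terms with j > n vanish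
  because d_{n-j,k+j} = 0 for n - j < 0; we sum over j = 0..n.\<close>
definition is_B_seq_I :: "'a::field fps \<Rightarrow> 'a fps \<Rightarrow> (nat \<Rightarrow> 'a) \<Rightarrow> bool" where
  "is_B_seq_I g f b \<longleftrightarrow>
     (\<forall>n::int. \<forall>k::int. n \<ge> 0 \<longrightarrow> k \<ge> 1 \<longrightarrow>
        rentry g f (n + 1) k =
          rentry g f n (k - 1) + (\<Sum>j\<in>{0..nat n}. b j * rentry g f (n - int j) (k + int j)))"

end

theory Submission
  imports Defs
begin

text \<open>Only the first column of the type-I recurrence is needed: that column is \<open>g f\<close>, so
  the case \<open>k = 1\<close> says exactly \<open>g f = t g + t g f B(t f)\<close>, and cancelling \<open>g\<close> gives the
  first formula. Right composition with \<open>f\<close> and with \<open>fps_inv f\<close> are mutually inverse,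
  and composing the first formula with \<open>fps_inv f\<close> yields the second. Finally
  \<open>fps_inv f = t / A\<close> by the definition of the A-sequence, so multiplying the second
  formula by \<open>A / t\<close> turns it into the third.\<close>

unbundle fps_syntax

lemma fps_mult_power_nth_eq_0:
  fixes g f :: "'a::comm_semiring_1 fps"
  assumes "f $ 0 = 0" "n < k"
  shows "(g * f ^ k) $ n = 0"
  unfolding fps_mult_nth
  by (rule sum.neutral) (use assms startsby_zero_power_prefix[OF assms(1)] in auto)

lemma rentry_of_nat:
  fixes g f :: "'a::field fps"
  assumes "f $ 0 = 0"
  shows "rentry g f (int n) (int k) = (g * f ^ k) $ n"
  using fps_mult_power_nth_eq_0[OF assms, of n k g] by (auto simp: rentry_def)

lemma fps_mult_compose_nth:
  fixes P B h :: "'a::comm_semiring_1 fps"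
  assumes h0: "h $ 0 = 0"
  shows "(P * (B oo h)) $ n = (\<Sum>i=0..n. B $ i * (P * h ^ i) $ n)"
proof -
  have compose_nth: "(B oo h) $ m = (\<Sum>i=0..n. B $ i * (h ^ i) $ m)" if "m \<le> n" for m
    unfolding fps_compose_nth
    by (rule sum.mono_neutral_left) (use that startsby_zero_power_prefix[OF h0] in auto)
  have "(P * (B oo h)) $ n = (\<Sum>m=0..n. (B oo h) $ m * P $ (n - m))"
    by (subst mult.commute) (rule fps_mult_nth)
  also have "\<dots> = (\<Sum>m=0..n. \<Sum>i=0..n. B $ i * ((h ^ i) $ m * P $ (n - m)))"
    by (simp add: compose_nth sum_distrib_right mult.assoc)
  also have "\<dots> = (\<Sum>i=0..n. B $ i * (P * h ^ i) $ n)"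
    by (subst sum.swap) (simp add: fps_mult_nth[of "h ^ _" P, folded mult.commute] sum_distrib_left ac_simps)
  finally show ?thesis .
qed

lemma B_seq_I_first_column:
  fixes g f :: "'a::field fps"
  assumes "is_B_seq_I g f b" "f $ 0 = 0"
  shows "(g * f) $ Suc m = g $ m + (\<Sum>j=0..m. b j * (g * f ^ Suc j) $ (m - j))"
proof -
  have "rentry g f (int m + 1) 1 =
      rentry g f (int m) 0 + (\<Sum>j=0..m. b j * rentry g f (int m - int j) (1 + int j))"
    using assms(1) unfolding is_B_seq_I_def by (auto dest: spec[of _ "int m"] spec[of _ 1])
  moreover have "rentry g f (int m - int j) (1 + int j) = (g * f ^ Suc j) $ (m - j)"
    if "j \<in> {0..m}" for j
    using rentry_of_nat[OF assms(2), of g "m - j" "Suc j"] that by (simp add: of_nat_diff)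
  ultimately show ?thesis
    using rentry_of_nat[OF assms(2), of g "Suc m" 1] rentry_of_nat[OF assms(2), of g m 0]
    by (simp add: add.commute)
qed

lemma B_seq_I_imp_B_equation:
  fixes g f :: "'a::field fps"
  assumes "is_B_seq_I g f b" "g $ 0 = 1" "f $ 0 = 0"
  shows "f = fps_X + fps_X * f * (Abs_fps b oo (fps_X * f))"
proof -
  define C where "C = Abs_fps b oo (fps_X * f)"
  have shifted_power: "(g * f * (fps_X * f) ^ j) $ m = (g * f ^ Suc j) $ (m - j)"
    if "j \<le> m" for j m
  proof -
    have "g * f * (fps_X * f) ^ j = fps_X ^ j * (g * f ^ Suc j)"
      by (simp add: power_mult_distrib ac_simps)
    then show ?thesis
      using that by (simp only: fps_X_power_mult_nth) simp
  qed
  have "g * f = fps_X * g + fps_X * (g * f * C)"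
  proof (rule fps_ext)
    fix n
    show "(g * f) $ n = (fps_X * g + fps_X * (g * f * C)) $ n"
    proof (cases n)
      case 0
      then show ?thesis using assms(3) by simp
    next
      case (Suc m)
      have "(g * f * C) $ m = (\<Sum>j=0..m. b j * (g * f * (fps_X * f) ^ j) $ m)"
        unfolding C_def by (simp add: fps_mult_compose_nth)
      then show ?thesis
        using Suc B_seq_I_first_column[OF assms(1,3)] shifted_power by simp
    qed
  qed
  then have "g * f = g * (fps_X + fps_X * f * C)"
    by (simp add: algebra_simps)
  moreover have "g \<noteq> 0"
    using assms(2) by auto
  ultimately show ?thesis
    unfolding C_def by simp
qed

lemma fps_inv_nth_0 [simp]: "fps_inv f $ 0 = 0"
  by (simp add: fps_inv_def)

lemma fps_eq_compose_inv_iff: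
  fixes f P R :: "'a::field fps"
  assumes f0: "f $ 0 = 0" and f1: "f $ 1 \<noteq> 0"
  shows "P = R oo fps_inv f \<longleftrightarrow> P oo f = R"
proof
  assume "P = R oo fps_inv f"
  then have "P oo f = R oo (fps_inv f oo f)"
    by (simp add: fps_compose_assoc[OF f0])
  then show "P oo f = R"
    by (simp add: fps_inv[OF f0 f1])
next
  assume "P oo f = R"
  then have "R oo fps_inv f = P oo (f oo fps_inv f)"
    by (simp add: fps_compose_assoc[OF fps_inv_nth_0 f0])
  then show "P = R oo fps_inv f"
    by (simp add: fps_inv_right[OF f0 f1])
qed

lemma B_equation_iff_inv_B_equation:
  fixes f B :: "'a::field fps"
  assumes f0: "f $ 0 = 0" and f1: "f $ 1 \<noteq> 0"
  shows "f = fps_X + fps_X * f * (B oo (fps_X * f)) \<longleftrightarrow>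
    fps_X = fps_inv f + fps_X * fps_inv f * (B oo (fps_X * fps_inv f))"
proof -
  let ?F = "fps_inv f" and ?R = "fps_X + fps_X * f * (B oo (fps_X * f))"
  have "(B oo (fps_X * f)) oo ?F = B oo ((fps_X * f) oo ?F)"
    by (simp add: fps_compose_assoc f0)
  then have "?R oo ?F = ?F + fps_X * ?F * (B oo (fps_X * ?F))"
    by (simp add: fps_compose_add_distrib fps_compose_mult_distrib fps_inv_right[OF f0 f1] ac_simps)
  then have "fps_X = ?F + fps_X * ?F * (B oo (fps_X * ?F)) \<longleftrightarrow> fps_X oo f = ?R"
    by (metis fps_eq_compose_inv_iff[OF f0 f1])
  then show ?thesis
    using f0 by auto
qed

lemma A_series_nth_0:
  assumes "is_A_series f A"
  shows "A $ 0 = f $ 1"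
  using arg_cong[OF assms[unfolded is_A_series_def], of "\<lambda>h. h $ 1"] by simp

lemma A_series_inv_mult:
  fixes f A :: "'a::field fps"
  assumes f0: "f $ 0 = 0" and f1: "f $ 1 \<noteq> 0" and "is_A_series f A"
  shows "fps_inv f * A = fps_X"
proof -
  have "(fps_inv f * A) oo f = fps_X * (A oo f)"
    by (simp add: fps_compose_mult_distrib[OF f0] fps_inv[OF f0 f1])
  also have "\<dots> = fps_X oo f"
    using assms(3) f0 by (simp add: is_A_series_def)
  finally show ?thesis
    by (simp add: fps_compose_inj_right[OF f0 f1])
qed

lemma inv_B_equation_iff_A_B_equation:
  fixes F A B :: "'a::field fps"
  assumes FA: "F * A = fps_X" and A0: "A $ 0 \<noteq> 0"
  shows "fps_X = F + fps_X * F * (B oo (fps_X * F)) \<longleftrightarrow>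
    A = 1 + fps_X * (B oo (fps_X ^ 2 * inverse A))"
proof -
  define D where "D = B oo (fps_X ^ 2 * inverse A)"
  have "F = F * A * inverse A"
    using inverse_mult_eq_1'[OF A0] by (simp add: mult.assoc)
  then have "fps_X * F = fps_X ^ 2 * inverse A"
    using FA by (simp add: power2_eq_square mult.assoc)
  then have "fps_X = F + fps_X * F * (B oo (fps_X * F)) \<longleftrightarrow>
      fps_X * A = (F + fps_X * F * D) * A"
    using A0 unfolding D_def by (metis fps_nonzero_nth mult_cancel_right)
  also have "(F + fps_X * F * D) * A = fps_X * (1 + fps_X * D)"
    using FA by (simp add: algebra_simps)
  also have "fps_X * A = fps_X * (1 + fps_X * D) \<longleftrightarrow> A = 1 + fps_X * D"
    by simp
  finally show ?thesis
    unfolding D_def .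
qed

theorem proposition2p1:
  fixes g f A :: "'a::field fps" and b :: "nat \<Rightarrow> 'a"
  assumes "riordan g f"
    and "is_A_series f A"
  defines "B \<equiv> Abs_fps b"
  shows "(is_B_seq_I g f b \<longrightarrow>
            f = fps_X + fps_X * f * fps_compose B (fps_X * f)
          \<and> fps_X = fps_inv f + fps_X * fps_inv f * fps_compose B (fps_X * fps_inv f)
          \<and> A = 1 + fps_X * fps_compose B (fps_X ^ 2 * inverse A))
       \<and> ((f = fps_X + fps_X * f * fps_compose B (fps_X * f))
            \<longleftrightarrow> (fps_X = fps_inv f + fps_X * fps_inv f * fps_compose B (fps_X * fps_inv f)))
       \<and> ((fps_X = fps_inv f + fps_X * fps_inv f * fps_compose B (fps_X * fps_inv f))
            \<longleftrightarrow> (A = 1 + fps_X * fps_compose B (fps_X ^ 2 * inverse A)))"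
proof -
  have g0: "g $ 0 = 1" and f0: "f $ 0 = 0" and f1: "f $ 1 \<noteq> 0"
    using assms(1) by (auto simp: riordan_def)
  have A0: "A $ 0 \<noteq> 0"
    using A_series_nth_0[OF assms(2)] f1 by simp
  note first_iff = B_equation_iff_inv_B_equation[OF f0 f1, of B]
  note second_iff = inv_B_equation_iff_A_B_equation[OF A_series_inv_mult[OF f0 f1 assms(2)] A0, of B]
  have "is_B_seq_I g f b \<Longrightarrow> f = fps_X + fps_X * f * (B oo (fps_X * f))"
    unfolding B_def using B_seq_I_imp_B_equation g0 f0 by blast
  then show ?thesis
    using first_iff second_iff by blast
qed

end
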